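(* Consider problem (P): minimize $g(x)$ subject to $q(x)\in\Theta$, under the standing assumptions below, and let $\bar x$ be a local minimizer of (P) at which MSCQ holds. Then for each $w\in\overline K$ and each $z\in\mathbb{R}^n$ with $$\nabla Q(\bar x)z+\langle w,\nabla^2Q(\bar x)w\rangle\in T^2_C\big(Q(\bar x),\nabla Q(\bar x)w\big),$$ one has $\nabla g(\bar x)z+\langle w,\nabla^2 g(\bar x)w\rangle\ge0$.
   Context: Standing assumptions: $g:\mathbb{R}^n\to\mathbb{R}$ and $q:\mathbb{R}^n\to\mathbb{R}^m$ are $C^2$; $\Theta\subset\mathbb{R}^m$ is nonempty closed convex; $\Gamma=\{x\mid q(x)\in\Theta\}$; $\bar x\in\Gamma$, $\bar y=q(\bar x)$. $\Theta$ is $C^2$-cone reducible at $\bar y$ to a pointed closed convex cone $C\subset\mathbb{R}^l$: there are a neighborhood $V$ of $\bar y$ and a $C^2$ map $h:V\to\mathbb{R}^l$ with $h(\bar y)=0$, $\nabla h(\bar y)$ surjective, and $\Theta\cap V=\{y\in V\mid h(y)\in C\}$. $Q:=h\circ q$ on $q^{-1}(V)$, and $\langle w,\nabla^2Q(\bar x)w\rangle$ denotes the vector $(w^T\nabla^2Q_j(\bar x)w)_{j=1}^l$. MSCQ (metric subregularity constraint qualification) at $\bar x$: there exist $\kappa>0$ and a neighborhood $U$ of $\bar x$ with $d(x;\Gamma)\le\kappa\,d(q(x);\Theta)$ for all $x\in U$. The critical cone is $\overline K=T_\Gamma(\bar x)\cap\{\nabla g(\bar x)\}^\perp$ with $T_\Gamma$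 the contingent cone. The outer second-order tangent set is $T^2_C(y,d)=\{v\mid \exists t_k\downarrow0:\ d(y+t_kd+\tfrac12t_k^2v;C)=o(t_k^2)\}$. *)

theory Defs
  imports "HOL-Analysis.Analysis"
begin

text \<open>C^2 on an open set S, with first derivative Df and second derivative D2f
  (Frechet derivatives, as bounded linear maps); D2f x w w is the quadratic form.\<close>
definition C2_on :: "'a::euclidean_space set \<Rightarrow> ('a \<Rightarrow> 'b::euclidean_space)
    \<Rightarrow> ('a \<Rightarrow> 'a \<Rightarrow>\<^sub>L 'b) \<Rightarrow> ('a \<Rightarrow> 'a \<Rightarrow>\<^sub>L 'a \<Rightarrow>\<^sub>L 'b) \<Rightarrow> bool" where
  "C2_on S f Df D2f \<longleftrightarrow> open S \<and>
     (\<forall>x\<in>S. (f has_derivative blinfun_apply (Df x)) (at x)) \<and>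
     (\<forall>x\<in>S. (Df has_derivative blinfun_apply (D2f x)) (at x)) \<and>
     continuous_on S D2f"

definition contingent_cone :: "'a::real_normed_vector set \<Rightarrow> 'a \<Rightarrow> 'a set" where
  "contingent_cone S x = {d. \<exists>(t::nat \<Rightarrow> real) (dk::nat \<Rightarrow> 'a).
      (\<forall>k. t k > 0) \<and> t \<longlonglongrightarrow> 0 \<and> dk \<longlonglongrightarrow> d \<and> (\<forall>k. x + t k *\<^sub>R dk k \<in> S)}"

definition outer_second_order_tangent :: "'a::real_normed_vector set \<Rightarrow> 'a \<Rightarrow> 'a \<Rightarrow> 'a set" where
  "outer_second_order_tangent C y d = {v. \<exists>t::nat \<Rightarrow> real.
      (\<forall>k. t k > 0) \<and> t \<longlonglongrightarrow> 0 \<and>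
      (\<lambda>k. infdist (y + t k *\<^sub>R d + ((t k)\<^sup>2 / 2) *\<^sub>R v) C / (t k)\<^sup>2) \<longlonglongrightarrow> 0}"

definition pointed_cone :: "'a::real_vector set \<Rightarrow> bool" where
  "pointed_cone C \<longleftrightarrow> cone C \<and> C \<inter> uminus ` C = {0}"

end

theory Submission
  imports Defs
begin

(* Take t_k from the definition of the outer second-order tangent set and follow the parabola
   x_k = xbar + t_k w + t_k^2/2 z.  A second-order Taylor expansion of Q = h o q gives
   d(Q(x_k), C) = o(t_k^2).  Since Dh(q xbar) is onto, h is metrically regular near q xbar
   (Lyusternik-Graves), so the reduction turns this into d(q(x_k), Theta) = o(t_k^2), and MSCQ
   into d(x_k, Gamma) = o(t_k^2).  Moving x_k to a nearest point of Gamma changes g by o(t_k^2)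
   because g is locally Lipschitz, so local minimality gives g(x_k) - g(xbar) >= o(t_k^2).
   Expanding g along the same parabola, where Dg(xbar) w = 0, shows that this difference is
   t_k^2/2 (Dg(xbar) z + D2g(xbar) w w) + o(t_k^2). *)

lemma quadratic_bound_from_derivative_bound:
  fixes \<psi> \<psi>' :: "real \<Rightarrow> 'a::real_normed_vector"
  assumes \<psi>0: "\<psi> 0 = 0"
    and \<psi>d: "\<And>s. \<bar>s\<bar> < d \<Longrightarrow> (\<psi> has_derivative (\<lambda>h. h *\<^sub>R \<psi>' s)) (at s)"
    and \<psi>'_bound: "\<And>s. \<bar>s\<bar> < d \<Longrightarrow> norm (\<psi>' s) \<le> e * \<bar>s\<bar>"
    and e: "e \<ge> 0"
    and t: "\<bar>t\<bar> < d"
  shows "norm (\<psi> t) \<le> e * t\<^sup>2"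
proof -
  have "norm (\<psi> t - \<psi> 0) \<le> (e * \<bar>t\<bar>) * norm (t - 0)"
  proof (rule differentiable_bound[of "closed_segment 0 t" \<psi> "\<lambda>s h. h *\<^sub>R \<psi>' s"])
    fix s assume "s \<in> closed_segment 0 t"
    then have s: "\<bar>s\<bar> \<le> \<bar>t\<bar>"
      by (auto simp: closed_segment_eq_real_ivl split: if_splits)
    then show "(\<psi> has_derivative (\<lambda>h. h *\<^sub>R \<psi>' s)) (at s within closed_segment 0 t)"
      using \<psi>d t by (auto intro: has_derivative_at_withinI)
    have "onorm (\<lambda>h. h *\<^sub>R \<psi>' s) = norm (\<psi>' s)"
      using onorm_scaleR_left[OF bounded_linear_ident, of "\<psi>' s"] onorm_id[where 'a=real] by simp
    also have "\<dots> \<le> e * \<bar>s\<bar>" using s t by (intro \<psi>'_bound) simp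
    also have "\<dots> \<le> e * \<bar>t\<bar>" using s e by (rule mult_left_mono)
    finally show "onorm (\<lambda>h. h *\<^sub>R \<psi>' s) \<le> e * \<bar>t\<bar>" .
  qed auto
  then show ?thesis using \<psi>0 by (simp add: power2_eq_square abs_mult_self_eq)
qed

lemma little_o_square_of_vanishing_derivative:
  fixes \<psi> \<psi>' :: "real \<Rightarrow> 'a::real_normed_vector"
  assumes d: "d > 0"
    and \<psi>0: "\<psi> 0 = 0"
    and \<psi>d: "\<And>t. \<bar>t\<bar> < d \<Longrightarrow> (\<psi> has_derivative (\<lambda>h. h *\<^sub>R \<psi>' t)) (at t)"
    and \<psi>'0: "\<psi>' 0 = 0"
    and \<psi>'d: "(\<psi>' has_derivative (\<lambda>h. 0)) (at 0)"
  shows "((\<lambda>t. \<psi> t /\<^sub>R t\<^sup>2) \<longlongrightarrow> 0) (at 0)"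
proof -
  have "((\<lambda>s. norm (\<psi>' s) / \<bar>s\<bar>) \<longlongrightarrow> 0) (at 0)"
    using \<psi>'d \<psi>'0 unfolding has_derivative_iff_norm by simp
  have "\<forall>\<^sub>F t in at 0. dist (\<psi> t /\<^sub>R t\<^sup>2) 0 < e" if "e > 0" for e
  proof -
    obtain d' where d': "d' > 0" "\<And>s. s \<noteq> 0 \<Longrightarrow> \<bar>s\<bar> < d' \<Longrightarrow> norm (\<psi>' s) / \<bar>s\<bar> < e/2"
      using tendstoD[OF \<open>((\<lambda>s. norm (\<psi>' s) / \<bar>s\<bar>) \<longlongrightarrow> 0) (at 0)\<close>, of "e/2"] \<open>e > 0\<close>
      by (force simp: eventually_at dist_real_def)
    have \<psi>'_bound: "norm (\<psi>' s) \<le> e/2 * \<bar>s\<bar>" if "\<bar>s\<bar> < min d d'" for s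
      using d'(2)[of s] that \<psi>'0 by (cases "s = 0") (auto simp: divide_less_eq)
    have \<psi>_bound: "norm (\<psi> t) \<le> e/2 * t\<^sup>2" if "\<bar>t\<bar> < min d d'" for t
      by (rule quadratic_bound_from_derivative_bound[where \<psi>=\<psi> and \<psi>'=\<psi>' and d="min d d'" and e="e/2",
            OF \<psi>0 _ \<psi>'_bound _ that])
        (use \<psi>d \<open>e > 0\<close> in simp_all)
    have "norm (\<psi> t /\<^sub>R t\<^sup>2) < e" if "t \<noteq> 0" "\<bar>t\<bar> < min d d'" for t
    proof -
      have "t\<^sup>2 > 0" using that by simp
      with \<psi>_bound[OF that(2)] have "norm (\<psi> t) / t\<^sup>2 \<le> e/2"
        by (simp add: pos_divide_le_eq mult.commute)
      moreover have "norm (\<psi> t /\<^sub>R t\<^sup>2) = norm (\<psi> t) / t\<^sup>2"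
        by (simp add: divide_inverse_commute)
      ultimately show ?thesis using \<open>e > 0\<close> by linarith
    qed
    then show ?thesis
      using d d' unfolding eventually_at by (auto intro!: exI[of _ "min d d'"])
  qed
  then show ?thesis by (simp add: tendsto_iff)
qed

lemma second_order_expansion_along_parabola:
  fixes f :: "'a::real_normed_vector \<Rightarrow> 'b::real_normed_vector"
  assumes S: "open S" "x \<in> S"
    and Df: "\<And>y. y \<in> S \<Longrightarrow> (f has_derivative blinfun_apply (Df y)) (at y)"
    and D2f: "(Df has_derivative blinfun_apply D2) (at x)"
  shows "((\<lambda>t. (f (x + t *\<^sub>R w + (t\<^sup>2/2) *\<^sub>R z) - f x - t *\<^sub>R Df x w
             - (t\<^sup>2/2) *\<^sub>R (Df x z + D2 w w)) /\<^sub>R t\<^sup>2) \<longlongrightarrow> 0) (at 0)"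
proof -
  define \<gamma> where "\<gamma> t = x + t *\<^sub>R w + (t\<^sup>2/2) *\<^sub>R z" for t :: real
  define b where "b = Df x z + D2 w w"
  define \<psi> where "\<psi> t = f (\<gamma> t) - f x - t *\<^sub>R Df x w - (t\<^sup>2/2) *\<^sub>R b" for t
  define \<psi>' where "\<psi>' t = Df (\<gamma> t) (w + t *\<^sub>R z) - Df x w - t *\<^sub>R b" for t
  \<comment> \<open>\<open>\<psi>'\<close> is the derivative of \<open>\<psi>\<close>; the choice of \<open>b\<close> makes it vanish to first order at 0.\<close>
  have \<gamma>d: "(\<gamma> has_derivative (\<lambda>h. h *\<^sub>R (w + t *\<^sub>R z))) (at t)" for t
    unfolding \<gamma>_def by (rule derivative_eq_intros refl)+ (auto simp: algebra_simps)
  have \<gamma>0: "\<gamma> 0 = x" by (simp add: \<gamma>_def)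
  obtain d where d: "d > 0" "\<And>t. \<bar>t\<bar> < d \<Longrightarrow> \<gamma> t \<in> S"
  proof -
    obtain e where "e > 0" "ball x e \<subseteq> S" using S openE by blast
    moreover obtain d where "d > 0" "\<And>t. dist t 0 < d \<Longrightarrow> dist (\<gamma> t) x < e"
      using has_derivative_continuous[OF \<gamma>d] \<open>e > 0\<close> \<gamma>0 unfolding continuous_at_eps_delta by metis
    ultimately show ?thesis using that[of d] by (auto simp: dist_commute subset_iff)
  qed
  have \<psi>d: "(\<psi> has_derivative (\<lambda>h. h *\<^sub>R \<psi>' t)) (at t)" if "\<bar>t\<bar> < d" for t
  proof -
    have "(f \<circ> \<gamma> has_derivative (\<lambda>h. Df (\<gamma> t) (h *\<^sub>R (w + t *\<^sub>R z)))) (at t)"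
      using diff_chain_at[OF \<gamma>d Df[OF d(2)[OF that]]] by (simp add: o_def)
    then show ?thesis unfolding \<psi>_def \<psi>'_def o_def
      by (auto intro!: derivative_eq_intros simp: blinfun.bilinear_simps algebra_simps)
  qed
  have \<psi>'d: "(\<psi>' has_derivative (\<lambda>h. 0)) (at 0)"
  proof -
    have "((\<lambda>t. Df (\<gamma> t)) has_derivative (\<lambda>h. D2 (h *\<^sub>R w))) (at 0)"
      using diff_chain_at[OF \<gamma>d[of 0], of Df] D2f \<gamma>0 by (simp add: o_def)
    then have "((\<lambda>t. Df (\<gamma> t) (w + t *\<^sub>R z)) has_derivative
        (\<lambda>h. Df (\<gamma> 0) (h *\<^sub>R z) + D2 (h *\<^sub>R w) (w + 0 *\<^sub>R z))) (at 0)"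
      by (rule blinfun.FDERIV) (auto intro!: derivative_eq_intros)
    then have "(\<psi>' has_derivative (\<lambda>h. (Df (\<gamma> 0) (h *\<^sub>R z) + D2 (h *\<^sub>R w) (w + 0 *\<^sub>R z)) - 0 - h *\<^sub>R b)) (at 0)"
      unfolding \<psi>'_def
      by (intro has_derivative_diff has_derivative_const has_derivative_scaleR_left has_derivative_ident)
    then show ?thesis
      by (rule has_derivative_eq_rhs)
        (auto simp: b_def \<gamma>0 blinfun.bilinear_simps scaleR_add_right)
  qed
  have "((\<lambda>t. \<psi> t /\<^sub>R t\<^sup>2) \<longlongrightarrow> 0) (at 0)"
    by (rule little_o_square_of_vanishing_derivative[OF d(1) _ \<psi>d _ \<psi>'d]) (simp_all add: \<psi>_def \<psi>'_def \<gamma>0)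
  then show ?thesis by (simp add: \<psi>_def \<gamma>_def b_def)
qed

lemma second_order_expansion_along_parabola_sequentially:
  fixes f :: "'a::real_normed_vector \<Rightarrow> 'b::real_normed_vector"
  assumes "open S" "x \<in> S"
    and "\<And>y. y \<in> S \<Longrightarrow> (f has_derivative blinfun_apply (Df y)) (at y)"
    and "(Df has_derivative blinfun_apply D2) (at x)"
    and t: "\<And>k. t k > 0" "t \<longlonglongrightarrow> 0"
  shows "(\<lambda>k. (f (x + t k *\<^sub>R w + ((t k)\<^sup>2/2) *\<^sub>R z) - f x - t k *\<^sub>R Df x w
             - ((t k)\<^sup>2/2) *\<^sub>R (Df x z + D2 w w)) /\<^sub>R (t k)\<^sup>2) \<longlonglongrightarrow> 0"
proof -
  have "\<forall>k. t k \<noteq> 0" using t(1) by (metis less_irrefl)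
  with t(2) have "filterlim t (at 0) sequentially"
    by (intro filterlim_atI always_eventually) auto
  from filterlim_compose[OF second_order_expansion_along_parabola[OF assms(1-4)] this]
  show ?thesis by (simp add: o_def)
qed

lemma blinfun_right_inverse:
  fixes A :: "'a::euclidean_space \<Rightarrow>\<^sub>L 'b::euclidean_space"
  assumes "surj (blinfun_apply A)"
  obtains R :: "'b \<Rightarrow>\<^sub>L 'a" where "A o\<^sub>L R = id_blinfun"
proof -
  have "linear (blinfun_apply A)" using blinfun.bounded_linear_right bounded_linear.linear by blast
  then obtain g where g: "linear g" "blinfun_apply A \<circ> g = id"
    using real_vector.linear_surjective_right_inverse assms by blast
  then have "blinfun_apply (Blinfun g) = g"
    by (simp add: bounded_linear_Blinfun_apply linear_conv_bounded_linear)
  with g(2) have "A o\<^sub>L Blinfun g = id_blinfun"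
    by (intro blinfun_eqI) (metis blinfun_apply_blinfun_compose comp_apply id_apply id_blinfun.rep_eq)
  then show ?thesis using that by blast
qed

lemma near_identity_map_hits_nearby_points:
  fixes \<phi> :: "'a::banach \<Rightarrow> 'a"
  assumes \<phi>d: "\<And>s. s \<in> cball 0 r \<Longrightarrow> (\<phi> has_derivative blinfun_apply (A s)) (at s)"
    and A: "\<And>s. s \<in> cball 0 r \<Longrightarrow> norm (A s - id_blinfun) \<le> 1/2"
    and u: "dist (\<phi> 0) u \<le> r/2"
  obtains s where "\<phi> s = u" "norm s \<le> 2 * dist (\<phi> 0) u"
proof -
  define T where "T s = s - (\<phi> s - u)" for s
  have T_lip: "norm (T s - T s') \<le> 1/2 * norm (s - s')" if "s \<in> cball 0 r" "s' \<in> cball 0 r" for s s'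
  proof (rule differentiable_bound[of "cball 0 r" T "\<lambda>s. blinfun_apply (id_blinfun - A s)"])
    fix s :: 'a assume s: "s \<in> cball 0 r"
    have "(T has_derivative (\<lambda>v. v - (A s v - 0))) (at s)"
      unfolding T_def by (intro has_derivative_diff has_derivative_ident \<phi>d[OF s] has_derivative_const)
    moreover have "blinfun_apply (id_blinfun - A s) = (\<lambda>v. v - (A s v - 0))"
      by (rule ext) (simp add: blinfun.diff_left)
    ultimately show "(T has_derivative blinfun_apply (id_blinfun - A s)) (at s within cball 0 r)"
      by (simp add: has_derivative_at_withinI)
    show "onorm (blinfun_apply (id_blinfun - A s)) \<le> 1/2"
      using A[OF s] by (simp add: norm_blinfun.rep_eq[symmetric] norm_minus_commute)
  qed (use that in simp_all)
  have "0 \<le> r" using u zero_le_dist[of "\<phi> 0" u] by linarith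
  then have "0 \<in> cball 0 r" by simp
  have "norm (T 0) = dist (\<phi> 0) u" by (simp add: T_def dist_norm norm_minus_commute)
  have T_bound: "norm (T s) \<le> 1/2 * norm s + dist (\<phi> 0) u" if "s \<in> cball 0 r" for s
  proof -
    have "norm (T s) \<le> norm (T s - T 0) + norm (T 0)"
      using norm_triangle_sub[of "T s" "T 0"] by linarith
    also have "\<dots> \<le> 1/2 * norm s + dist (\<phi> 0) u"
      using T_lip[OF that \<open>0 \<in> cball 0 r\<close>] \<open>norm (T 0) = dist (\<phi> 0) u\<close> by simp
    finally show ?thesis .
  qed
  have "\<exists>!s\<in>cball 0 r. T s = s"
  proof (rule Banach_fix)
    show "complete (cball (0::'a) r)" by (simp add: complete_eq_closed)
    show "cball (0::'a) r \<noteq> {}" using \<open>0 \<in> cball 0 r\<close> by blast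
    show "T ` cball 0 r \<subseteq> cball 0 r"
    proof (rule image_subsetI)
      fix s :: 'a assume "s \<in> cball 0 r"
      then have "norm s \<le> r" by simp
      then have "1/2 * norm s + dist (\<phi> 0) u \<le> r" using u by linarith
      then show "T s \<in> cball 0 r" using T_bound[OF \<open>s \<in> cball 0 r\<close>] by simp
    qed
    show "dist (T s) (T s') \<le> 1/2 * dist s s'" if "s \<in> cball 0 r" "s' \<in> cball 0 r" for s s'
      using T_lip[OF that] by (simp add: dist_norm)
  qed auto
  then obtain s where s: "s \<in> cball 0 r" "T s = s" by blast
  then have "\<phi> s = u" unfolding T_def by (simp add: algebra_simps)
  moreover have "norm s \<le> 2 * dist (\<phi> 0) u" using T_bound[OF s(1)] unfolding s(2) by linarith
  ultimately show ?thesis using that by blast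
qed

lemma local_solution_via_right_inverse:
  fixes h :: "'a::euclidean_space \<Rightarrow> 'b::euclidean_space"
  assumes Dh: "\<And>y. y \<in> ball y0 \<eta> \<Longrightarrow> (h has_derivative blinfun_apply (Dh y)) (at y)"
    and Dh_near: "\<And>y. y \<in> ball y0 \<eta> \<Longrightarrow> norm (Dh y - Dh y0) \<le> 1/(2*c)"
    and R: "Dh y0 o\<^sub>L R = id_blinfun" "norm R \<le> c" "c > 0"
    and y: "dist y0 y < \<eta>/2"
    and u: "dist (h y) u \<le> \<eta>/(4*c)"
  obtains y' where "y' \<in> ball y0 \<eta>" "h y' = u" "dist y y' \<le> 2*c * dist (h y) u"
proof -
  \<comment> \<open>Since \<open>Dh y0 o\<^sub>L R = id\<close>, the map \<open>s \<mapsto> h (y + R s)\<close> is a small perturbation of the identity.\<close>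
  define r where "r = \<eta> / (2*c)"
  have near: "y + R s \<in> ball y0 \<eta>" if "s \<in> cball 0 r" for s
  proof -
    have "norm (R s) \<le> norm R * norm s" by (rule norm_blinfun)
    also have "\<dots> \<le> c * r" using R(2,3) that by (intro mult_mono) auto
    also have "\<dots> = \<eta>/2" using \<open>c > 0\<close> by (simp add: r_def)
    finally have "dist y (y + R s) \<le> \<eta>/2" by (simp add: dist_norm)
    then show ?thesis using y dist_triangle[of y0 "y + R s" y] by simp
  qed
  have "((\<lambda>s. h (y + R s)) has_derivative blinfun_apply (Dh (y + R s) o\<^sub>L R)) (at s)"
    if "s \<in> cball 0 r" for s
  proof -
    have "((\<lambda>s. y + R s) has_derivative blinfun_apply R) (at s)"
      by (auto intro!: derivative_eq_intros)
    from diff_chain_at[OF this Dh[OF near[OF that]]] show ?thesis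
      by (simp add: o_def blinfun_compose.rep_eq)
  qed
  moreover have "norm ((Dh (y + R s) o\<^sub>L R) - id_blinfun) \<le> 1/2" if "s \<in> cball 0 r" for s
  proof -
    have "(Dh (y + R s) o\<^sub>L R) - id_blinfun = (Dh (y + R s) - Dh y0) o\<^sub>L R"
      using R(1) by (simp add: bounded_bilinear.diff_left[OF bounded_bilinear_blinfun_compose])
    then have "norm ((Dh (y + R s) o\<^sub>L R) - id_blinfun) \<le> norm (Dh (y + R s) - Dh y0) * norm R"
      by (simp add: norm_blinfun_compose)
    also have "\<dots> \<le> 1/(2*c) * c"
      using Dh_near[OF near[OF that]] R(2,3) by (intro mult_mono) auto
    finally show ?thesis using \<open>c > 0\<close> by simp
  qed
  moreover have "dist (h (y + R 0)) u \<le> r/2" using u by (simp add: r_def)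
  ultimately obtain s where s: "h (y + R s) = u" "norm s \<le> 2 * dist (h (y + R 0)) u"
    by (rule near_identity_map_hits_nearby_points)
  then have "norm s \<le> 2 * (\<eta>/(4*c))" using u by simp
  then have "s \<in> cball 0 r" by (simp add: r_def)
  have "dist y (y + R s) \<le> norm R * norm s" by (simp add: dist_norm norm_blinfun)
  also have "\<dots> \<le> c * (2 * dist (h y) u)" using R(2,3) s by (intro mult_mono) auto
  finally show ?thesis using that[of "y + R s"] s(1) near[OF \<open>s \<in> cball 0 r\<close>] by (simp add: mult.assoc)
qed

lemma surjective_derivative_metric_regularity:
  fixes h :: "'a::euclidean_space \<Rightarrow> 'b::euclidean_space"
  assumes V: "open V" "y0 \<in> V"
    and Dh: "\<And>y. y \<in> V \<Longrightarrow> (h has_derivative blinfun_apply (Dh y)) (at y)"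
    and Dh_cont: "isCont Dh y0"
    and surj: "surj (blinfun_apply (Dh y0))"
  obtains \<delta> L where "\<delta> > 0"
    "\<And>y u. dist y y0 < \<delta> \<Longrightarrow> dist (h y) u < \<delta> \<Longrightarrow>
       \<exists>y'\<in>V. h y' = u \<and> dist y y' \<le> L * dist (h y) u"
proof -
  obtain R where R: "Dh y0 o\<^sub>L R = id_blinfun" by (rule blinfun_right_inverse[OF surj])
  define c where "c = norm R + 1"
  have c: "norm R \<le> c" "c > 0" unfolding c_def by (auto simp: add_nonneg_pos)
  then have "1/(2*c) > 0" by simp
  then obtain \<eta>1 where \<eta>1: "\<eta>1 > 0" "\<And>y. dist y y0 < \<eta>1 \<Longrightarrow> dist (Dh y) (Dh y0) < 1/(2*c)"
    using Dh_cont unfolding continuous_at_eps_delta by blast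
  obtain \<eta>2 where \<eta>2: "\<eta>2 > 0" "ball y0 \<eta>2 \<subseteq> V" using V openE by blast
  define \<eta> where "\<eta> = min \<eta>1 \<eta>2"
  have ball: "ball y0 \<eta> \<subseteq> V" using \<eta>2 by (auto simp: \<eta>_def)
  then have Dh_ball: "(h has_derivative blinfun_apply (Dh y)) (at y)" if "y \<in> ball y0 \<eta>" for y
    using Dh that by blast
  have Dh_near: "norm (Dh y - Dh y0) \<le> 1/(2*c)" if "y \<in> ball y0 \<eta>" for y
  proof -
    have "dist (Dh y) (Dh y0) < 1/(2*c)" using \<eta>1(2)[of y] that by (simp add: \<eta>_def dist_commute)
    then show ?thesis by (simp add: dist_norm)
  qed
  define \<delta> where "\<delta> = min (\<eta>/2) (\<eta>/(4*c))"
  have "\<delta> > 0" using \<eta>1 \<eta>2 c by (simp add: \<eta>_def \<delta>_def)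
  moreover have "\<exists>y'\<in>V. h y' = u \<and> dist y y' \<le> (2*c) * dist (h y) u"
    if "dist y y0 < \<delta>" "dist (h y) u < \<delta>" for y u
  proof -
    have "dist y0 y < \<eta>/2" "dist (h y) u \<le> \<eta>/(4*c)" using that by (auto simp: \<delta>_def dist_commute)
    with Dh_ball Dh_near R c obtain y' where "y' \<in> ball y0 \<eta>" "h y' = u" "dist y y' \<le> 2*c * dist (h y) u"
      by (rule local_solution_via_right_inverse)
    then show ?thesis using ball by blast
  qed
  ultimately show ?thesis by (rule that)
qed

lemma infdist_estimate_by_reduction:
  fixes h :: "'a::euclidean_space \<Rightarrow> 'b::euclidean_space"
  assumes h: "C2_on V h Dh D2h" "y0 \<in> V" "surj (blinfun_apply (Dh y0))"
    and C: "closed C" "h y0 \<in> C"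
    and reduction: "\<Theta> \<inter> V = {y \<in> V. h y \<in> C}"
  obtains \<delta> L where "\<delta> > 0" "\<And>y. dist y y0 < \<delta> \<Longrightarrow> infdist y \<Theta> \<le> L * infdist (h y) C"
proof -
  have Dh: "\<And>y. y \<in> V \<Longrightarrow> (h has_derivative blinfun_apply (Dh y)) (at y)" and "open V"
    and D2h: "(Dh has_derivative blinfun_apply (D2h y0)) (at y0)"
    using h by (auto simp: C2_on_def)
  have "isCont Dh y0" using D2h by (rule has_derivative_continuous)
  obtain \<delta> L where \<delta>: "\<delta> > 0" and regular: "\<And>y u. dist y y0 < \<delta> \<Longrightarrow> dist (h y) u < \<delta> \<Longrightarrow>
      \<exists>y'\<in>V. h y' = u \<and> dist y y' \<le> L * dist (h y) u"
    by (rule surjective_derivative_metric_regularity[OF \<open>open V\<close> h(2) Dh \<open>isCont Dh y0\<close> h(3)]) auto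
  have "isCont h y0" using Dh[OF h(2)] by (rule has_derivative_continuous)
  then obtain \<delta>' where \<delta>': "\<delta>' > 0" "\<And>y. dist y y0 < \<delta>' \<Longrightarrow> dist (h y) (h y0) < \<delta>"
    using \<delta> unfolding continuous_at_eps_delta by blast
  have "min \<delta> \<delta>' > 0" using \<delta> \<delta>' by simp
  moreover have "infdist y \<Theta> \<le> L * infdist (h y) C" if y: "dist y y0 < min \<delta> \<delta>'" for y
  proof -
    obtain c where c: "c \<in> C" "infdist (h y) C = dist (h y) c"
      using infdist_attains_inf[OF C(1)] C(2) by blast
    have "dist (h y) c \<le> dist (h y) (h y0)" using c(2) infdist_le[OF C(2), of "h y"] by linarith
    also have "\<dots> < \<delta>" using \<delta>'(2) y by simp
    finally obtain y' where y': "y' \<in> V" "h y' = c" "dist y y' \<le> L * dist (h y) c"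
      using regular[of y c] y by auto
    then have "y' \<in> \<Theta>" using c(1) reduction by blast
    then have "infdist y \<Theta> \<le> dist y y'" by (rule infdist_le)
    with y' c show ?thesis by simp
  qed
  ultimately show ?thesis by (rule that)
qed

lemma tendsto_zero_if_eventually_dominated:
  fixes f g s :: "nat \<Rightarrow> real"
  assumes f_nonneg: "\<And>k. 0 \<le> f k"
    and dominated: "\<forall>\<^sub>F k in sequentially. f k \<le> c * g k"
    and g: "(\<lambda>k. g k / s k) \<longlonglongrightarrow> 0"
    and s: "\<And>k. s k > 0"
  shows "(\<lambda>k. f k / s k) \<longlonglongrightarrow> 0"
proof (rule tendsto_sandwich[of "\<lambda>k. 0" _ _ "\<lambda>k. c * (g k / s k)"])
  show "\<forall>\<^sub>F k in sequentially. 0 \<le> f k / s k"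
    using f_nonneg s by (simp add: less_imp_le)
  show "\<forall>\<^sub>F k in sequentially. f k / s k \<le> c * (g k / s k)"
    using dominated by eventually_elim (use s in \<open>simp add: divide_right_mono less_imp_le\<close>)
  show "(\<lambda>k. c * (g k / s k)) \<longlonglongrightarrow> 0"
    using tendsto_mult[OF tendsto_const g] by simp
qed simp

lemma C1_lipschitz_on_cball:
  fixes f :: "'a::euclidean_space \<Rightarrow> 'b::real_normed_vector"
  assumes Df: "\<And>y. y \<in> cball x r \<Longrightarrow> (f has_derivative blinfun_apply (Df y)) (at y)"
    and Df_cont: "continuous_on (cball x r) Df"
  obtains M where "M-lipschitz_on (cball x r) f"
proof -
  obtain M where M: "M > 0" "\<And>y. y \<in> cball x r \<Longrightarrow> norm (Df y) \<le> M"
    using compact_imp_bounded[OF compact_continuous_image[OF Df_cont compact_cball]]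
    unfolding bounded_pos by auto
  have "norm (f a - f b) \<le> M * norm (a - b)" if "a \<in> cball x r" "b \<in> cball x r" for a b
  proof (rule differentiable_bound[of "cball x r" f "\<lambda>y. blinfun_apply (Df y)" M])
    show "(f has_derivative blinfun_apply (Df y)) (at y within cball x r)" if "y \<in> cball x r" for y
      using Df[OF that] by (rule has_derivative_at_withinI)
    show "onorm (blinfun_apply (Df y)) \<le> M" if "y \<in> cball x r" for y
      using M(2)[OF that] by (simp add: norm_blinfun.rep_eq)
  qed (use that in auto)
  then have "M-lipschitz_on (cball x r) f"
    using M(1) by (intro lipschitz_onI) (auto simp: dist_norm)
  then show ?thesis by (rule that)
qed

lemma nearest_points_tendsto:
  fixes x :: "nat \<Rightarrow> 'a::euclidean_space"
  assumes \<Gamma>: "closed \<Gamma>" "x0 \<in> \<Gamma>"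
    and x: "x \<longlonglongrightarrow> x0"
  obtains p where "\<And>k. p k \<in> \<Gamma>" "\<And>k. infdist (x k) \<Gamma> = dist (x k) (p k)" "p \<longlonglongrightarrow> x0"
proof -
  have "\<forall>k. \<exists>y. y \<in> \<Gamma> \<and> infdist (x k) \<Gamma> = dist (x k) y"
    using infdist_attains_inf[OF \<Gamma>(1)] \<Gamma>(2) by blast
  then obtain p where p: "\<And>k. p k \<in> \<Gamma>" "\<And>k. infdist (x k) \<Gamma> = dist (x k) (p k)"
    by metis
  have "p \<longlonglongrightarrow> x0"
  proof (rule metric_tendsto_imp_tendsto)
    show "(\<lambda>k. 2 * dist (x k) x0) \<longlonglongrightarrow> 0"
      using tendsto_mult[OF tendsto_const[of 2] tendsto_dist[OF x tendsto_const[of x0]]] by simp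
    have "dist (p k) x0 \<le> 2 * dist (x k) x0" for k
      using p[of k] infdist_le[OF \<Gamma>(2), of "x k"] dist_triangle3[of "p k" x0 "x k"] by simp
    then show "\<forall>\<^sub>F k in sequentially. dist (p k) x0 \<le> dist (2 * dist (x k) x0) 0"
      by simp
  qed
  with p show ?thesis by (rule that)
qed

lemma local_min_difference_quotient_limit_nonneg:
  fixes g :: "'a::euclidean_space \<Rightarrow> real"
  assumes Dg: "\<And>x. (g has_derivative blinfun_apply (Dg x)) (at x)" "continuous_on UNIV Dg"
    and \<Gamma>: "closed \<Gamma>" "x0 \<in> \<Gamma>"
    and local_min: "\<exists>\<epsilon>>0. \<forall>x\<in>\<Gamma>. dist x x0 < \<epsilon> \<longrightarrow> g x0 \<le> g x"
    and s: "\<And>k. s k > 0"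
    and x: "x \<longlonglongrightarrow> x0" "(\<lambda>k. infdist (x k) \<Gamma> / s k) \<longlonglongrightarrow> 0"
    and quotient: "(\<lambda>k. (g (x k) - g x0) / s k) \<longlonglongrightarrow> A"
  shows "A \<ge> 0"
proof -
  obtain p where p: "\<And>k. p k \<in> \<Gamma>" "\<And>k. infdist (x k) \<Gamma> = dist (x k) (p k)" "p \<longlonglongrightarrow> x0"
    using nearest_points_tendsto[OF \<Gamma> x(1)] by blast
  obtain M where M: "M-lipschitz_on (cball x0 1) g"
    using C1_lipschitz_on_cball[OF Dg(1) continuous_on_subset[OF Dg(2)]] by blast
  obtain \<epsilon> where \<epsilon>: "\<epsilon> > 0" "\<And>y. y \<in> \<Gamma> \<Longrightarrow> dist y x0 < \<epsilon> \<Longrightarrow> g x0 \<le> g y"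
    using local_min by blast
  have "\<forall>\<^sub>F k in sequentially. dist (x k) x0 < 1" using tendstoD[OF x(1)] by simp
  moreover have "\<forall>\<^sub>F k in sequentially. dist (p k) x0 < min 1 \<epsilon>"
    using tendstoD[OF p(3), of "min 1 \<epsilon>"] \<epsilon>(1) by simp
  ultimately have near: "\<forall>\<^sub>F k in sequentially. x k \<in> cball x0 1 \<and> p k \<in> cball x0 1 \<and> dist (p k) x0 < \<epsilon>"
    by eventually_elim (simp add: dist_commute)
  have "(\<lambda>k. \<bar>g (p k) - g (x k)\<bar> / s k) \<longlonglongrightarrow> 0"
  proof (rule tendsto_zero_if_eventually_dominated[OF abs_ge_zero _ x(2) s])
    show "\<forall>\<^sub>F k in sequentially. \<bar>g (p k) - g (x k)\<bar> \<le> M * infdist (x k) \<Gamma>"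
      using near by eventually_elim
        (use lipschitz_onD[OF M] p(2) in \<open>simp add: dist_real_def dist_commute\<close>)
  qed
  then have "(\<lambda>k. \<bar>(g (p k) - g (x k)) / s k\<bar>) \<longlonglongrightarrow> 0"
    using s by (simp add: abs_divide abs_of_pos)
  then have "(\<lambda>k. (g (p k) - g (x k)) / s k) \<longlonglongrightarrow> 0"
    by (simp only: tendsto_rabs_zero_iff)
  from tendsto_add[OF quotient this]
  have "(\<lambda>k. (g (p k) - g x0) / s k) \<longlonglongrightarrow> A"
    by (simp add: add_divide_distrib[symmetric])
  moreover have "\<forall>\<^sub>F k in sequentially. 0 \<le> (g (p k) - g x0) / s k"
    using near by eventually_elim (use \<epsilon>(2) p(1) s in \<open>simp add: less_imp_le\<close>)
  ultimately show ?thesis by (rule tendsto_lowerbound) simp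
qed

lemma outer_second_order_tangent_along_parabola:
  fixes F :: "'a::real_normed_vector \<Rightarrow> 'b::real_normed_vector"
  assumes S: "open S" "x \<in> S"
    and DF: "\<And>y. y \<in> S \<Longrightarrow> (F has_derivative blinfun_apply (DF y)) (at y)"
    and D2F: "(DF has_derivative blinfun_apply D2) (at x)"
    and tangent: "DF x z + D2 w w \<in> outer_second_order_tangent C (F x) (DF x w)"
  obtains t where "\<And>k. t k > 0" "t \<longlonglongrightarrow> 0"
    "(\<lambda>k. infdist (F (x + t k *\<^sub>R w + ((t k)\<^sup>2/2) *\<^sub>R z)) C / (t k)\<^sup>2) \<longlonglongrightarrow> 0"
proof -
  define v where "v = DF x z + D2 w w"
  obtain t where t: "\<And>k. t k > 0" "t \<longlonglongrightarrow> 0"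
    and near_C: "(\<lambda>k. infdist (F x + t k *\<^sub>R DF x w + ((t k)\<^sup>2/2) *\<^sub>R v) C / (t k)\<^sup>2) \<longlonglongrightarrow> 0"
    using tangent unfolding outer_second_order_tangent_def v_def by blast
  define a where "a k = F x + t k *\<^sub>R DF x w + ((t k)\<^sup>2/2) *\<^sub>R v" for k
  define y where "y k = x + t k *\<^sub>R w + ((t k)\<^sup>2/2) *\<^sub>R z" for k
  have s: "(t k)\<^sup>2 > 0" for k using t(1)[of k] by simp
  have "(\<lambda>k. (F (y k) - a k) /\<^sub>R (t k)\<^sup>2) \<longlonglongrightarrow> 0"
    using second_order_expansion_along_parabola_sequentially[OF S DF D2F t, of w z]
    by (simp add: y_def a_def v_def algebra_simps)
  from tendsto_norm[OF this] have "(\<lambda>k. norm (F (y k) - a k) / (t k)\<^sup>2) \<longlonglongrightarrow> 0"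
    using s by (simp add: divide_inverse_commute)
  with near_C have lim: "(\<lambda>k. (infdist (a k) C + norm (F (y k) - a k)) / (t k)\<^sup>2) \<longlonglongrightarrow> 0"
    using tendsto_add by (fastforce simp: a_def add_divide_distrib)
  have "infdist (F (y k)) C \<le> 1 * (infdist (a k) C + norm (F (y k) - a k))" for k
    using infdist_triangle[of "F (y k)" C "a k"] by (simp add: dist_norm)
  then have dominated: "\<forall>\<^sub>F k in sequentially.
      infdist (F (y k)) C \<le> 1 * (infdist (a k) C + norm (F (y k) - a k))"
    by simp
  have "(\<lambda>k. infdist (F (y k)) C / (t k)\<^sup>2) \<longlonglongrightarrow> 0"
    by (rule tendsto_zero_if_eventually_dominated[OF infdist_nonneg dominated lim s])
  then show ?thesis using that t unfolding y_def by blast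
qed

lemma difference_quotient_along_parabola:
  fixes f :: "'a::real_normed_vector \<Rightarrow> real"
  assumes "open S" "x \<in> S"
    and "\<And>y. y \<in> S \<Longrightarrow> (f has_derivative blinfun_apply (Df y)) (at y)"
    and "(Df has_derivative blinfun_apply D2) (at x)"
    and t: "\<And>k. t k > 0" "t \<longlonglongrightarrow> 0"
    and critical: "Df x w = 0"
  shows "(\<lambda>k. (f (x + t k *\<^sub>R w + ((t k)\<^sup>2/2) *\<^sub>R z) - f x) / (t k)\<^sup>2) \<longlonglongrightarrow> (Df x z + D2 w w) / 2"
proof -
  define A where "A = Df x z + D2 w w"
  have "(f (x + t k *\<^sub>R w + ((t k)\<^sup>2/2) *\<^sub>R z) - f x - t k *\<^sub>R Df x w - ((t k)\<^sup>2/2) *\<^sub>R A) /\<^sub>R (t k)\<^sup>2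
      = (f (x + t k *\<^sub>R w + ((t k)\<^sup>2/2) *\<^sub>R z) - f x) / (t k)\<^sup>2 - A/2" for k
    using t(1)[of k] by (simp add: critical field_simps)
  with second_order_expansion_along_parabola_sequentially[OF assms(1-4) t, of w z]
  have "(\<lambda>k. (f (x + t k *\<^sub>R w + ((t k)\<^sup>2/2) *\<^sub>R z) - f x) / (t k)\<^sup>2 - A/2) \<longlonglongrightarrow> 0"
    by (simp add: A_def)
  from tendsto_add[OF this tendsto_const[of "A/2"]] show ?thesis by (simp add: A_def)
qed

lemma parabola_second_order_close_to_feasible_set:
  fixes q :: "'a::euclidean_space \<Rightarrow> 'b::euclidean_space" and h :: "'b \<Rightarrow> 'c::euclidean_space"
  assumes q_cont: "\<And>x. isCont q x"
    and h: "C2_on V h Dh D2h" "q x0 \<in> V" "surj (blinfun_apply (Dh (q x0)))"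
    and C: "closed C"
    and reduction: "\<Theta> \<inter> V = {y \<in> V. h y \<in> C}"
    and feasible: "q x0 \<in> \<Theta>"
    and Q: "C2_on (q -` V) (h \<circ> q) DQ D2Q"
    and U: "open U" "x0 \<in> U"
    and mscq: "\<And>x. x \<in> U \<Longrightarrow> infdist x {x. q x \<in> \<Theta>} \<le> \<kappa> * infdist (q x) \<Theta>"
    and z: "DQ x0 z + D2Q x0 w w \<in> outer_second_order_tangent C ((h \<circ> q) x0) (DQ x0 w)"
  obtains t where "\<And>k. t k > 0" "t \<longlonglongrightarrow> 0"
    "(\<lambda>k. infdist (x0 + t k *\<^sub>R w + ((t k)\<^sup>2/2) *\<^sub>R z) {x. q x \<in> \<Theta>} / (t k)\<^sup>2) \<longlonglongrightarrow> 0"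
proof -
  have "h (q x0) \<in> C" using reduction feasible h(2) by blast
  obtain \<delta> L where \<delta>: "\<delta> > 0"
    and reduced: "\<And>y. dist y (q x0) < \<delta> \<Longrightarrow> infdist y \<Theta> \<le> L * infdist (h y) C"
    by (rule infdist_estimate_by_reduction[OF h C \<open>h (q x0) \<in> C\<close> reduction]) auto
  have Q': "open (q -` V)" "x0 \<in> q -` V"
    "\<And>x. x \<in> q -` V \<Longrightarrow> ((h \<circ> q) has_derivative blinfun_apply (DQ x)) (at x)"
    "(DQ has_derivative blinfun_apply (D2Q x0)) (at x0)"
    using Q h(2) by (auto simp: C2_on_def)
  obtain t where t: "\<And>k. t k > 0" "t \<longlonglongrightarrow> 0"
    and Q_near_C: "(\<lambda>k. infdist ((h \<circ> q) (x0 + t k *\<^sub>R w + ((t k)\<^sup>2/2) *\<^sub>R z)) C / (t k)\<^sup>2) \<longlonglongrightarrow> 0"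
    by (rule outer_second_order_tangent_along_parabola[OF Q' z]) auto
  define x where "x k = x0 + t k *\<^sub>R w + ((t k)\<^sup>2/2) *\<^sub>R z" for k
  have s: "(t k)\<^sup>2 > 0" for k using t(1)[of k] by simp
  have "x \<longlonglongrightarrow> x0" unfolding x_def by (auto intro!: tendsto_eq_intros t(2))
  then have "(\<lambda>k. q (x k)) \<longlonglongrightarrow> q x0" by (rule isCont_tendsto_compose[OF q_cont])
  from tendstoD[OF this \<delta>]
  have "\<forall>\<^sub>F k in sequentially. infdist (q (x k)) \<Theta> \<le> L * infdist ((h \<circ> q) (x k)) C"
    by eventually_elim (simp add: reduced)
  from tendsto_zero_if_eventually_dominated[OF infdist_nonneg this _ s] Q_near_C
  have q_near_\<Theta>: "(\<lambda>k. infdist (q (x k)) \<Theta> / (t k)\<^sup>2) \<longlonglongrightarrow> 0" by (simp add: x_def)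
  have "\<forall>\<^sub>F k in sequentially. x k \<in> U" using topological_tendstoD[OF \<open>x \<longlonglongrightarrow> x0\<close> U] .
  then have "\<forall>\<^sub>F k in sequentially. infdist (x k) {x. q x \<in> \<Theta>} \<le> \<kappa> * infdist (q (x k)) \<Theta>"
    by eventually_elim (rule mscq)
  from tendsto_zero_if_eventually_dominated[OF infdist_nonneg this q_near_\<Theta> s]
  show ?thesis unfolding x_def by (rule that[OF t])
qed

theorem lemma4p4:
  fixes g :: "real^'n \<Rightarrow> real" and q :: "real^'n \<Rightarrow> real^'m"
    and Dg :: "real^'n \<Rightarrow> ((real^'n) \<Rightarrow>\<^sub>L real)"
    and D2g :: "real^'n \<Rightarrow> ((real^'n) \<Rightarrow>\<^sub>L (real^'n) \<Rightarrow>\<^sub>L real)"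
    and Theta :: "(real^'m) set" and xbar :: "real^'n"
    and V :: "(real^'m) set" and h :: "real^'m \<Rightarrow> real^'l" and C :: "(real^'l) set"
    and DQ :: "real^'n \<Rightarrow> ((real^'n) \<Rightarrow>\<^sub>L (real^'l))"
    and D2Q :: "real^'n \<Rightarrow> ((real^'n) \<Rightarrow>\<^sub>L (real^'n) \<Rightarrow>\<^sub>L (real^'l))"
    and w z :: "real^'n"
  assumes g_C2: "C2_on UNIV g Dg D2g"
    and q_C2: "\<exists>Dq D2q. C2_on UNIV q Dq D2q"
    and Theta: "Theta \<noteq> {}" "closed Theta" "convex Theta"
    and xbar_feas: "q xbar \<in> Theta"
    and V: "open V" "q xbar \<in> V"
    and h_C2: "\<exists>Dh D2h. C2_on V h Dh D2h \<and> surj (blinfun_apply (Dh (q xbar)))"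
    and h0: "h (q xbar) = 0"
    and C: "closed C" "convex C" "pointed_cone C"
    and reduc: "Theta \<inter> V = {y \<in> V. h y \<in> C}"
    and Q_C2: "C2_on (q -` V) (h \<circ> q) DQ D2Q"
    and locmin: "\<exists>\<epsilon>>0. \<forall>x. q x \<in> Theta \<and> dist x xbar < \<epsilon> \<longrightarrow> g xbar \<le> g x"
    and MSCQ: "\<exists>\<kappa>>0. \<exists>U. open U \<and> xbar \<in> U \<and>
                 (\<forall>x\<in>U. infdist x {x. q x \<in> Theta} \<le> \<kappa> * infdist (q x) Theta)"
    and w_crit: "w \<in> contingent_cone {x. q x \<in> Theta} xbar" "Dg xbar w = 0"
    and z: "DQ xbar z + D2Q xbar w w
              \<in> outer_second_order_tangent C ((h \<circ> q) xbar) (DQ xbar w)"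
  shows "Dg xbar z + D2g xbar w w \<ge> 0"
proof -
  obtain Dq D2q where "C2_on UNIV q Dq D2q" using q_C2 by blast
  then have q_cont: "isCont q x" for x by (auto simp: C2_on_def intro: has_derivative_continuous)
  obtain Dh D2h where h: "C2_on V h Dh D2h" "surj (blinfun_apply (Dh (q xbar)))"
    using h_C2 by blast
  obtain \<kappa> U where U: "open U" "xbar \<in> U"
    and mscq: "\<And>x. x \<in> U \<Longrightarrow> infdist x {x. q x \<in> Theta} \<le> \<kappa> * infdist (q x) Theta"
    using MSCQ by blast
  obtain t where t: "\<And>k. t k > 0" "t \<longlonglongrightarrow> 0"
    and near_feasible: "(\<lambda>k. infdist (xbar + t k *\<^sub>R w + ((t k)\<^sup>2/2) *\<^sub>R z) {x. q x \<in> Theta} / (t k)\<^sup>2) \<longlonglongrightarrow> 0"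
    by (rule parabola_second_order_close_to_feasible_set[OF q_cont h(1) V(2) h(2) C(1) reduc
          xbar_feas Q_C2 U mscq z]) auto
  have Dg: "\<And>x. (g has_derivative blinfun_apply (Dg x)) (at x)"
    "\<And>x. (Dg has_derivative blinfun_apply (D2g x)) (at x)"
    using g_C2 by (auto simp: C2_on_def)
  have "continuous_on UNIV Dg"
    using Dg(2) by (auto intro: has_derivative_continuous continuous_at_imp_continuous_on)
  moreover have "closed {x. q x \<in> Theta}"
    using continuous_closed_vimage[OF Theta(2) q_cont] by (simp add: vimage_def)
  moreover have "xbar \<in> {x. q x \<in> Theta}" using xbar_feas by simp
  moreover have "\<exists>\<epsilon>>0. \<forall>x\<in>{x. q x \<in> Theta}. dist x xbar < \<epsilon> \<longrightarrow> g xbar \<le> g x"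
    using locmin by auto
  moreover have "(t k)\<^sup>2 > 0" for k using t(1)[of k] by simp
  moreover have "(\<lambda>k. xbar + t k *\<^sub>R w + ((t k)\<^sup>2/2) *\<^sub>R z) \<longlonglongrightarrow> xbar"
    by (auto intro!: tendsto_eq_intros t(2))
  ultimately have "(Dg xbar z + D2g xbar w w) / 2 \<ge> 0"
    by (rule local_min_difference_quotient_limit_nonneg[OF Dg(1) _ _ _ _ _ _ near_feasible
          difference_quotient_along_parabola[OF open_UNIV UNIV_I Dg t w_crit(2)]])
  then show ?thesis by simp
qed

end
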